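(* Let $M$ be a finite MDP with state space $S=Z\times\tilde S$ and $p_{\mathrm{maj}},p_{\mathrm{min}}>0$, and let the agent rewards $\rho$ be state-independent, i.e. there is $\tilde\rho\in\mathbb{R}^{A}$ with $\rho_{s,a}=\tilde\rho_a$ for all $s\in S,a\in A$. Then problem (P) has an optimal solution.
   Context: A finite MDP is $M=(S,A,D,P,R,\gamma)$ where $S,A$ are finite nonempty sets, $D$ is a probability distribution on $S$, $P_{s,a,s'}\ge 0$ with $\sum_{s'}P_{s,a,s'}=1$ for all $s,a$, $R\in\mathbb{R}^{S\times A}$, and $\gamma\in(0,1)$. A policy is $\pi\in\mathbb{R}^{S\times A}$ with $\pi_{s,a}\ge0$ and $\sum_a\pi_{s,a}=1$. Let $P^{(\pi)}_{s,s'}=\sum_a\pi_{s,a}P_{s,a,s'}$. For a distribution $\mu$ on $S$ set $\mu^{(\pi,0)}=\mu$, $\mu^{(\pi,t)}_{s'}=\sum_s\mu^{(\pi,t-1)}_sP^{(\pi)}_{s,s'}$, and $\mu^{(\pi)}=(1-\gamma)\sum_{t\ge0}\gamma^t\mu^{(\pi,t)}$. Write $D^{(\pi)}$ for $\mu=D$, $\Lambda^{(\pi)}_{s,a}=D^{(\pi)}_s\pi_{s,a}$, and $R^{(\pi)}=(1-\gamma)^{-1}\sum_{s,a}\Lambda^{(\pi)}_{s,a}R_{s,a}$. Fairness setup: $S=Z\times\tilde S$ with $Z=\{\mathrm{maj},\mathrm{min}\}$ and $\tilde S$ finite nonempty; agent rewards $\rho\in\mathbb{R}^{S\times A}$. For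 $z\in Z$, $p_z=\sum_{\tilde s}D_{(z,\tilde s)}$, $D_z$ is the distribution $(D_z)_s=D_s\cdot\mathbb{I}[s=(z,\tilde s)\text{ for some }\tilde s]/p_z$, $D_z^{(\pi)}$ is $\mu^{(\pi)}$ for $\mu=D_z$, $(\Lambda_z^{(\pi)})_{s,a}=(D_z^{(\pi)})_s\pi_{s,a}$, and $\rho_z^{(\pi)}=\sum_{s,a}(\Lambda_z^{(\pi)})_{s,a}\rho_{s,a}$. A policy satisfies demographic parity if $\rho_{\mathrm{maj}}^{(\pi)}=\rho_{\mathrm{min}}^{(\pi)}$; $\Pi_{\mathrm{DP}}$ is the set of such policies. Problem (P): maximize $R^{(\pi)}$ over $\pi\in\Pi_{\mathrm{DP}}$. *)

theory Defs
  imports "HOL-Analysis.Analysis"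
begin

definition is_distribution :: "('s::finite \<Rightarrow> real) \<Rightarrow> bool" where
  "is_distribution \<mu> \<longleftrightarrow> (\<forall>s. \<mu> s \<ge> 0) \<and> (\<Sum>s\<in>UNIV. \<mu> s) = 1"

definition is_transition :: "('s::finite \<Rightarrow> 'a::finite \<Rightarrow> 's \<Rightarrow> real) \<Rightarrow> bool" where
  "is_transition P \<longleftrightarrow> (\<forall>s a s'. P s a s' \<ge> 0) \<and> (\<forall>s a. (\<Sum>s'\<in>UNIV. P s a s') = 1)"

definition is_mdp :: "('s::finite \<Rightarrow> real) \<Rightarrow> ('s \<Rightarrow> 'a::finite \<Rightarrow> 's \<Rightarrow> real) \<Rightarrow> real \<Rightarrow> bool" where
  "is_mdp D P \<gamma> \<longleftrightarrow> is_distribution D \<and> is_transition P \<and> 0 < \<gamma> \<and> \<gamma> < 1"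

definition is_policy :: "('s::finite \<Rightarrow> 'a::finite \<Rightarrow> real) \<Rightarrow> bool" where
  "is_policy \<pi> \<longleftrightarrow> (\<forall>s a. \<pi> s a \<ge> 0) \<and> (\<forall>s. (\<Sum>a\<in>UNIV. \<pi> s a) = 1)"

definition policy_trans :: "('s::finite \<Rightarrow> 'a::finite \<Rightarrow> 's \<Rightarrow> real) \<Rightarrow> ('s \<Rightarrow> 'a \<Rightarrow> real) \<Rightarrow> 's \<Rightarrow> 's \<Rightarrow> real" where
  "policy_trans P \<pi> s s' = (\<Sum>a\<in>UNIV. \<pi> s a * P s a s')"

fun state_dist_t :: "('s::finite \<Rightarrow> 'a::finite \<Rightarrow> 's \<Rightarrow> real) \<Rightarrow> ('s \<Rightarrow> 'a \<Rightarrow> real) \<Rightarrow> ('s \<Rightarrow> real) \<Rightarrow> nat \<Rightarrow> 's \<Rightarrow> real" where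
  "state_dist_t P \<pi> \<mu> 0 = \<mu>"
| "state_dist_t P \<pi> \<mu> (Suc t) = (\<lambda>s'. \<Sum>s\<in>UNIV. state_dist_t P \<pi> \<mu> t s * policy_trans P \<pi> s s')"

definition occ_dist :: "('s::finite \<Rightarrow> 'a::finite \<Rightarrow> 's \<Rightarrow> real) \<Rightarrow> real \<Rightarrow> ('s \<Rightarrow> 'a \<Rightarrow> real) \<Rightarrow> ('s \<Rightarrow> real) \<Rightarrow> 's \<Rightarrow> real" where
  "occ_dist P \<gamma> \<pi> \<mu> s = (1 - \<gamma>) * (\<Sum>t. \<gamma> ^ t * state_dist_t P \<pi> \<mu> t s)"

definition policy_return :: "('s::finite \<Rightarrow> real) \<Rightarrow> ('s \<Rightarrow> 'a::finite \<Rightarrow> 's \<Rightarrow> real) \<Rightarrow> ('s \<Rightarrow> 'a \<Rightarrow> real) \<Rightarrow> real \<Rightarrow> ('s \<Rightarrow> 'a \<Rightarrow> real) \<Rightarrow> real" where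
  "policy_return D P R \<gamma> \<pi> = inverse (1 - \<gamma>) * (\<Sum>s\<in>UNIV. \<Sum>a\<in>UNIV. occ_dist P \<gamma> \<pi> D s * \<pi> s a * R s a)"

text \<open>Fairness setup: groups Z = {maj, min}; states are Z \<times> S~.\<close>
datatype grp = Maj | Min

lemma UNIV_grp: "(UNIV :: grp set) = {Maj, Min}"
  using grp.exhaust by auto

instance grp :: finite
  by standard (simp add: UNIV_grp)

definition group_prob :: "(grp \<times> 't::finite \<Rightarrow> real) \<Rightarrow> grp \<Rightarrow> real" where
  "group_prob D z = (\<Sum>t\<in>UNIV. D (z, t))"

definition group_dist :: "(grp \<times> 't::finite \<Rightarrow> real) \<Rightarrow> grp \<Rightarrow> grp \<times> 't \<Rightarrow> real" where
  "group_dist D z s = (if fst s = z then D s / group_prob D z else 0)"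

definition group_reward :: "(grp \<times> 't::finite \<Rightarrow> real) \<Rightarrow> (grp \<times> 't \<Rightarrow> 'a::finite \<Rightarrow> grp \<times> 't \<Rightarrow> real) \<Rightarrow> (grp \<times> 't \<Rightarrow> 'a \<Rightarrow> real) \<Rightarrow> real \<Rightarrow> (grp \<times> 't \<Rightarrow> 'a \<Rightarrow> real) \<Rightarrow> grp \<Rightarrow> real" where
  "group_reward D P \<rho> \<gamma> \<pi> z = (\<Sum>s\<in>UNIV. \<Sum>a\<in>UNIV. occ_dist P \<gamma> \<pi> (group_dist D z) s * \<pi> s a * \<rho> s a)"

definition demographic_parity :: "(grp \<times> 't::finite \<Rightarrow> real) \<Rightarrow> (grp \<times> 't \<Rightarrow> 'a::finite \<Rightarrow> grp \<times> 't \<Rightarrow> real) \<Rightarrow> (grp \<times> 't \<Rightarrow> 'a \<Rightarrow> real) \<Rightarrow> real \<Rightarrow> (grp \<times> 't \<Rightarrow> 'a \<Rightarrow> real) \<Rightarrow> bool" where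
  "demographic_parity D P \<rho> \<gamma> \<pi> \<longleftrightarrow> group_reward D P \<rho> \<gamma> \<pi> Maj = group_reward D P \<rho> \<gamma> \<pi> Min"

definition Pi_DP :: "(grp \<times> 't::finite \<Rightarrow> real) \<Rightarrow> (grp \<times> 't \<Rightarrow> 'a::finite \<Rightarrow> grp \<times> 't \<Rightarrow> real) \<Rightarrow> (grp \<times> 't \<Rightarrow> 'a \<Rightarrow> real) \<Rightarrow> real \<Rightarrow> (grp \<times> 't \<Rightarrow> 'a \<Rightarrow> real) set" where
  "Pi_DP D P \<rho> \<gamma> = {\<pi>. is_policy \<pi> \<and> demographic_parity D P \<rho> \<gamma> \<pi>}"

end

theory Submission
  imports Defs
begin

text \<open>The policies form a compact set, and every quantity defined from the discounted
  occupancy measure is continuous on it: the occupancy measure is a uniform limit of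
  polynomials in the policy entries, dominated by a geometric series. Hence the demographic
  parity constraint cuts out a compact set, on which the continuous return attains its maximum.
  This set is nonempty when the agent rewards are state-independent: for the uniform policy,
  the reward of each group is the average of the action rewards, whatever its occupancy
  measure is.\<close>

lemma continuous_on_policy_entry: "continuous_on S (\<lambda>\<pi>::'s \<Rightarrow> 'a \<Rightarrow> real. \<pi> s a)"
  using continuous_on_product_then_coordinatewise
      [OF continuous_on_product_then_coordinatewise[OF continuous_on_id, of S s], of a]
  by simp

lemma policy_trans_nonneg:
  "is_transition P \<Longrightarrow> is_policy \<pi> \<Longrightarrow> policy_trans P \<pi> s s' \<ge> 0"
  unfolding policy_trans_def is_transition_def is_policy_def
  by (auto intro!: sum_nonneg)

lemma sum_policy_trans:
  assumes "is_transition P" "is_policy \<pi>"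
  shows "(\<Sum>s'\<in>UNIV. policy_trans P \<pi> s s') = 1"
proof -
  have "(\<Sum>s'\<in>UNIV. policy_trans P \<pi> s s') = (\<Sum>a\<in>UNIV. \<pi> s a * (\<Sum>s'\<in>UNIV. P s a s'))"
    unfolding policy_trans_def sum_distrib_left by (rule sum.swap)
  also have "\<dots> = 1"
    using assms unfolding is_transition_def is_policy_def by simp
  finally show ?thesis .
qed

lemma sum_state_dist_t:
  assumes "is_transition P" "is_policy \<pi>"
  shows "(\<Sum>s\<in>UNIV. state_dist_t P \<pi> \<mu> t s) = (\<Sum>s\<in>UNIV. \<mu> s)"
proof (induction t)
  case (Suc t)
  have "(\<Sum>s'\<in>UNIV. state_dist_t P \<pi> \<mu> (Suc t) s')
      = (\<Sum>s\<in>UNIV. state_dist_t P \<pi> \<mu> t s * (\<Sum>s'\<in>UNIV. policy_trans P \<pi> s s'))"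
    unfolding state_dist_t.simps sum_distrib_left by (rule sum.swap)
  with Suc show ?case
    by (simp add: sum_policy_trans[OF assms])
qed simp

lemma sum_abs_state_dist_t_le:
  assumes "is_transition P" "is_policy \<pi>"
  shows "(\<Sum>s\<in>UNIV. \<bar>state_dist_t P \<pi> \<mu> t s\<bar>) \<le> (\<Sum>s\<in>UNIV. \<bar>\<mu> s\<bar>)"
proof (induction t)
  case (Suc t)
  have "(\<Sum>s'\<in>UNIV. \<bar>state_dist_t P \<pi> \<mu> (Suc t) s'\<bar>)
      \<le> (\<Sum>s'\<in>UNIV. \<Sum>s\<in>UNIV. \<bar>state_dist_t P \<pi> \<mu> t s\<bar> * policy_trans P \<pi> s s')"
    by (auto intro!: sum_mono order.trans[OF sum_abs]
        simp: abs_mult policy_trans_nonneg[OF assms])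
  also have "\<dots> = (\<Sum>s\<in>UNIV. \<bar>state_dist_t P \<pi> \<mu> t s\<bar> * (\<Sum>s'\<in>UNIV. policy_trans P \<pi> s s'))"
    unfolding sum_distrib_left by (rule sum.swap)
  finally show ?case
    using Suc by (simp add: sum_policy_trans[OF assms])
qed simp

lemma norm_discounted_state_dist_t_le:
  assumes "is_transition P" "is_policy \<pi>" "0 \<le> \<gamma>"
  shows "norm (\<gamma> ^ t * state_dist_t P \<pi> \<mu> t s) \<le> \<gamma> ^ t * (\<Sum>s\<in>UNIV. \<bar>\<mu> s\<bar>)"
proof -
  have "\<bar>state_dist_t P \<pi> \<mu> t s\<bar> \<le> (\<Sum>s\<in>UNIV. \<bar>state_dist_t P \<pi> \<mu> t s\<bar>)"
    by (rule member_le_sum) auto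
  also have "\<dots> \<le> (\<Sum>s\<in>UNIV. \<bar>\<mu> s\<bar>)"
    by (rule sum_abs_state_dist_t_le[OF assms(1,2)])
  finally show ?thesis
    using assms(3) by (simp add: abs_mult mult_left_mono)
qed

lemma summable_geometric_bound:
  "0 \<le> \<gamma> \<Longrightarrow> \<gamma> < 1 \<Longrightarrow> summable (\<lambda>t. \<gamma> ^ t * (c::real))"
  by (intro summable_mult2 summable_geometric) auto

lemma continuous_on_state_dist_t: "continuous_on S (\<lambda>\<pi>. state_dist_t P \<pi> \<mu> t s)"
proof (induction t arbitrary: s)
  case (Suc t)
  show ?case
    unfolding state_dist_t.simps policy_trans_def
    by (intro continuous_on_sum continuous_on_mult Suc continuous_on_policy_entry
        continuous_on_const)
qed simp

lemma continuous_on_occ_dist: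
  assumes "is_transition P" "0 \<le> \<gamma>" "\<gamma> < 1"
  shows "continuous_on {\<pi>. is_policy \<pi>} (\<lambda>\<pi>. occ_dist P \<gamma> \<pi> \<mu> s)"
proof -
  have "uniform_limit {\<pi>. is_policy \<pi>} (\<lambda>n \<pi>. \<Sum>t<n. \<gamma> ^ t * state_dist_t P \<pi> \<mu> t s)
      (\<lambda>\<pi>. \<Sum>t. \<gamma> ^ t * state_dist_t P \<pi> \<mu> t s) sequentially"
  proof (rule Weierstrass_m_test)
    show "summable (\<lambda>t. \<gamma> ^ t * (\<Sum>s\<in>UNIV. \<bar>\<mu> s\<bar>))"
      using assms(2,3) by (rule summable_geometric_bound)
    show "norm (\<gamma> ^ t * state_dist_t P \<pi> \<mu> t s) \<le> \<gamma> ^ t * (\<Sum>s\<in>UNIV. \<bar>\<mu> s\<bar>)"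
      if "\<pi> \<in> {\<pi>. is_policy \<pi>}" for t \<pi>
      using norm_discounted_state_dist_t_le[OF assms(1) _ assms(2)] that by simp
  qed
  then have "continuous_on {\<pi>. is_policy \<pi>} (\<lambda>\<pi>. \<Sum>t. \<gamma> ^ t * state_dist_t P \<pi> \<mu> t s)"
    by (rule uniform_limit_theorem[rotated])
      (auto intro!: always_eventually continuous_on_sum continuous_on_mult
        continuous_on_state_dist_t continuous_on_const)
  then show ?thesis
    unfolding occ_dist_def by (intro continuous_on_mult continuous_on_const)
qed

lemma sum_occ_dist:
  assumes "is_transition P" "is_policy \<pi>" "0 \<le> \<gamma>" "\<gamma> < 1" "(\<Sum>s\<in>UNIV. \<mu> s) = 1"
  shows "(\<Sum>s\<in>UNIV. occ_dist P \<gamma> \<pi> \<mu> s) = 1"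
proof -
  have "summable (\<lambda>t. \<gamma> ^ t * state_dist_t P \<pi> \<mu> t s)" for s
    by (rule summable_comparison_test'[OF summable_geometric_bound[OF assms(3,4)]])
      (rule norm_discounted_state_dist_t_le[OF assms(1-3)])
  then have "(\<Sum>s\<in>UNIV. \<Sum>t. \<gamma> ^ t * state_dist_t P \<pi> \<mu> t s)
      = (\<Sum>t. \<Sum>s\<in>UNIV. \<gamma> ^ t * state_dist_t P \<pi> \<mu> t s)"
    by (rule suminf_sum[symmetric])
  also have "\<dots> = (\<Sum>t. \<gamma> ^ t)"
    by (simp add: sum_distrib_left[symmetric] sum_state_dist_t[OF assms(1,2)] assms(5))
  also have "\<dots> = 1 / (1 - \<gamma>)"
    using assms by (simp add: suminf_geometric)
  finally show ?thesis
    using assms unfolding occ_dist_def by (simp add: sum_distrib_left[symmetric])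
qed

lemma sum_group_dist:
  assumes "group_prob D z > 0"
  shows "(\<Sum>s\<in>UNIV. group_dist D z s) = 1"
proof -
  have "(\<Sum>s\<in>UNIV. group_dist D z s) = (\<Sum>z'\<in>UNIV. \<Sum>t\<in>UNIV. group_dist D z (z', t))"
    by (simp add: UNIV_Times_UNIV[symmetric] sum.cartesian_product del: UNIV_Times_UNIV)
  also have "\<dots> = (\<Sum>t\<in>UNIV. D (z, t) / group_prob D z)"
    unfolding group_dist_def UNIV_grp by (cases z) auto
  also have "\<dots> = 1"
    using assms by (simp add: sum_divide_distrib[symmetric] group_prob_def)
  finally show ?thesis .
qed

lemma continuous_on_group_reward:
  assumes "is_transition P" "0 \<le> \<gamma>" "\<gamma> < 1"
  shows "continuous_on {\<pi>. is_policy \<pi>} (\<lambda>\<pi>. group_reward D P \<rho> \<gamma> \<pi> z)"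
  unfolding group_reward_def
  by (intro continuous_on_sum continuous_on_mult continuous_on_occ_dist[OF assms]
      continuous_on_policy_entry continuous_on_const)

lemma continuous_on_policy_return:
  assumes "is_transition P" "0 \<le> \<gamma>" "\<gamma> < 1"
  shows "continuous_on {\<pi>. is_policy \<pi>} (policy_return D P R \<gamma>)"
  unfolding policy_return_def
  by (intro continuous_on_sum continuous_on_mult continuous_on_occ_dist[OF assms]
      continuous_on_policy_entry continuous_on_const)

lemma compact_unit_box: "compact (PiE UNIV (\<lambda>s::'s. PiE UNIV (\<lambda>a::'a. {0..1::real})))"
proof -
  have "compact (PiE UNIV (\<lambda>a::'a. {0..1::real}))"
    using compactin_PiE[of "\<lambda>_. euclidean" UNIV "\<lambda>a::'a. {0..1::real}"]
    by (simp add: euclidean_product_topology)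
  then show ?thesis
    using compactin_PiE[of "\<lambda>_. euclidean" UNIV "\<lambda>s::'s. PiE UNIV (\<lambda>a::'a. {0..1::real})"]
    by (simp add: euclidean_product_topology)
qed

lemma policies_eq_box_Int_simplex:
  "{\<pi>::'s::finite \<Rightarrow> 'a::finite \<Rightarrow> real. is_policy \<pi>}
    = (\<Inter>s. {\<pi>. (\<Sum>a\<in>UNIV. \<pi> s a) = 1}) \<inter> PiE UNIV (\<lambda>s. PiE UNIV (\<lambda>a. {0..1}))"
proof (intro set_eqI iffI)
  fix \<pi> :: "'s \<Rightarrow> 'a \<Rightarrow> real"
  assume "\<pi> \<in> {\<pi>. is_policy \<pi>}"
  then have nonneg: "\<And>s a. \<pi> s a \<ge> 0" and sum1: "\<And>s. (\<Sum>a\<in>UNIV. \<pi> s a) = 1"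
    by (auto simp: is_policy_def)
  have "\<pi> s a \<le> 1" for s a
    using member_le_sum[of a UNIV "\<pi> s"] nonneg sum1 by auto
  with nonneg sum1 show "\<pi> \<in> (\<Inter>s. {\<pi>. (\<Sum>a\<in>UNIV. \<pi> s a) = 1}) \<inter> PiE UNIV (\<lambda>s. PiE UNIV (\<lambda>a. {0..1}))"
    by auto
qed (auto simp: is_policy_def PiE_iff)

lemma compact_policies: "compact {\<pi>::'s::finite \<Rightarrow> 'a::finite \<Rightarrow> real. is_policy \<pi>}"
proof -
  have "closed {\<pi>::'s \<Rightarrow> 'a \<Rightarrow> real. (\<Sum>a\<in>UNIV. \<pi> s a) = 1}" for s
  proof -
    have "continuous_on UNIV (\<lambda>\<pi>::'s \<Rightarrow> 'a \<Rightarrow> real. \<Sum>a\<in>UNIV. \<pi> s a)"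
      by (intro continuous_on_sum continuous_on_policy_entry)
    from continuous_closed_preimage_constant[OF this closed_UNIV, of 1] show ?thesis
      by simp
  qed
  then show ?thesis
    unfolding policies_eq_box_Int_simplex
    by (intro closed_Int_compact closed_INT compact_unit_box) auto
qed

lemma compact_Pi_DP:
  assumes "is_transition P" "0 \<le> \<gamma>" "\<gamma> < 1"
  shows "compact (Pi_DP D P \<rho> \<gamma>)"
proof -
  let ?gap = "\<lambda>\<pi>. group_reward D P \<rho> \<gamma> \<pi> Maj - group_reward D P \<rho> \<gamma> \<pi> Min"
  have "Pi_DP D P \<rho> \<gamma> = {\<pi> \<in> {\<pi>. is_policy \<pi>}. ?gap \<pi> = 0} \<inter> {\<pi>. is_policy \<pi>}"
    by (auto simp: Pi_DP_def demographic_parity_def)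
  moreover have "closed {\<pi> \<in> {\<pi>. is_policy \<pi>}. ?gap \<pi> = 0}"
    by (intro continuous_closed_preimage_constant compact_imp_closed compact_policies
        continuous_on_diff continuous_on_group_reward assms)
  ultimately show ?thesis
    using closed_Int_compact[OF _ compact_policies] by simp
qed

definition uniform_policy :: "'s \<Rightarrow> 'a::finite \<Rightarrow> real" where
  "uniform_policy s a = 1 / real CARD('a)"

lemma is_policy_uniform_policy: "is_policy uniform_policy"
  unfolding is_policy_def uniform_policy_def by simp

lemma group_reward_uniform_policy:
  fixes \<rho>' :: "'a::finite \<Rightarrow> real"
  assumes "is_transition P" "0 \<le> \<gamma>" "\<gamma> < 1" "group_prob D z > 0"
    and "\<And>s a. \<rho> s a = \<rho>' a"
  shows "group_reward D P \<rho> \<gamma> uniform_policy z = (\<Sum>a\<in>UNIV. \<rho>' a) / real CARD('a)"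
proof -
  let ?c = "(\<Sum>a\<in>UNIV. \<rho>' a) / real CARD('a)"
  have "group_reward D P \<rho> \<gamma> uniform_policy z
      = (\<Sum>s\<in>UNIV. occ_dist P \<gamma> uniform_policy (group_dist D z) s * ?c)"
    unfolding group_reward_def uniform_policy_def
    by (simp add: assms(5) sum_distrib_left sum_divide_distrib)
  also have "\<dots> = (\<Sum>s\<in>UNIV. occ_dist P \<gamma> uniform_policy (group_dist D z) s) * ?c"
    by (rule sum_distrib_right[symmetric])
  also have "\<dots> = ?c"
    using sum_occ_dist[OF assms(1) is_policy_uniform_policy assms(2,3) sum_group_dist[OF assms(4)]]
    by simp
  finally show ?thesis .
qed

lemma uniform_policy_in_Pi_DP:
  fixes \<rho>' :: "'a::finite \<Rightarrow> real"
  assumes "is_transition P" "0 \<le> \<gamma>" "\<gamma> < 1"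
    and "group_prob D Maj > 0" "group_prob D Min > 0"
    and "\<And>s a. \<rho> s a = \<rho>' a"
  shows "uniform_policy \<in> Pi_DP D P \<rho> \<gamma>"
  using is_policy_uniform_policy
    group_reward_uniform_policy[OF assms(1-3) assms(4) assms(6)]
    group_reward_uniform_policy[OF assms(1-3) assms(5) assms(6)]
  by (simp add: Pi_DP_def demographic_parity_def)

theorem theorem2:
  fixes D :: "grp \<times> 't::finite \<Rightarrow> real"
    and P :: "grp \<times> 't \<Rightarrow> 'a::finite \<Rightarrow> grp \<times> 't \<Rightarrow> real"
    and R :: "grp \<times> 't \<Rightarrow> 'a \<Rightarrow> real"
    and \<rho> :: "grp \<times> 't \<Rightarrow> 'a \<Rightarrow> real"
    and \<rho>' :: "'a \<Rightarrow> real"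
    and \<gamma> :: real
  assumes "is_mdp D P \<gamma>"
    and "group_prob D Maj > 0" and "group_prob D Min > 0"
    and "\<forall>s a. \<rho> s a = \<rho>' a"
  shows "\<exists>\<pi>\<in>Pi_DP D P \<rho> \<gamma>. \<forall>\<pi>'\<in>Pi_DP D P \<rho> \<gamma>. policy_return D P R \<gamma> \<pi>' \<le> policy_return D P R \<gamma> \<pi>"
proof -
  have mdp: "is_transition P" "0 \<le> \<gamma>" "\<gamma> < 1"
    using assms(1) by (auto simp: is_mdp_def)
  have "Pi_DP D P \<rho> \<gamma> \<noteq> {}"
    using uniform_policy_in_Pi_DP[OF mdp assms(2,3)] assms(4) by blast
  moreover have "continuous_on (Pi_DP D P \<rho> \<gamma>) (policy_return D P R \<gamma>)"
    by (rule continuous_on_subset[OF continuous_on_policy_return[OF mdp]])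
      (auto simp: Pi_DP_def)
  ultimately show ?thesis
    using continuous_attains_sup[OF compact_Pi_DP[OF mdp]] by blast
qed

end
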